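(* If the ring $D(R_A)$ is simple, then the semigroup $\mathbb NA$ is scored.
   Context: $A\subset\mathbb Z^d$ is a finite set generating the group $\mathbb Z^d$; $R_A=\mathbb C[\mathbb NA]\subseteq\mathbb C[t_1^{\pm1},\dots,t_d^{\pm1}]$; $D(R_A)=\{P\in\mathbb C[t^{\pm1}]\langle\partial_1,\dots,\partial_d\rangle:P(R_A)\subseteq R_A\}$. For a facet $\sigma$ of the cone $\mathbb R_{\ge0}A$, $F_\sigma$ is the unique linear form with $F_\sigma(\mathbb R_{\ge0}A)\ge0$, $F_\sigma(\sigma)=0$, $F_\sigma(\mathbb Z^d)=\mathbb Z$. $\mathbb NA$ is scored if $\mathbb NA=\bigcap_{\sigma\text{ facet}}\{\mathbf a\in\mathbb Z^d:F_\sigma(\mathbf a)\in F_\sigma(\mathbb NA)\}$. Simple means no two-sided ideals other than $0$ and $D(R_A)$. *)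

theory Defs
  imports "HOL-Analysis.Analysis" "HOL-Algebra.Ideal"
begin

text \<open>Lattice points of Z^d are vectors int^'d (d = CARD('d) arbitrary but fixed).
  A Laurent polynomial in C[t_1^{+-1},...,t_d^{+-1}] is a finitely supported coefficient
  function on Z^d.\<close>

type_synonym 'd lpoly = "int ^ 'd \<Rightarrow> complex"

definition laurent :: "'d lpoly \<Rightarrow> bool" where
  "laurent f \<longleftrightarrow> finite {m. f m \<noteq> 0}"

definition semigrp :: "(int ^ 'd) set \<Rightarrow> (int ^ 'd) set" where
  "semigrp A = {m. \<exists>k :: int ^ 'd \<Rightarrow> nat. m = (\<Sum>a\<in>A. int (k a) *s a)}"

definition grp :: "(int ^ 'd) set \<Rightarrow> (int ^ 'd) set" where
  "grp A = {m. \<exists>k :: int ^ 'd \<Rightarrow> int. m = (\<Sum>a\<in>A. k a *s a)}"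

definition R_A :: "(int ^ 'd) set \<Rightarrow> 'd lpoly set" where
  "R_A A = {f. laurent f \<and> {m. f m \<noteq> 0} \<subseteq> semigrp A}"

text \<open>Action of the monomial operator t^a \<partial>^b on a (coefficient function of a)
  Laurent polynomial: \<partial>^b t^n = (prod_i n_i (n_i-1) ... (n_i-b_i+1)) t^(n-b), then
  multiply by t^a.\<close>
definition mono_op :: "int ^ 'd \<Rightarrow> nat ^ 'd \<Rightarrow> 'd lpoly \<Rightarrow> 'd lpoly" where
  "mono_op a b f = (\<lambda>m. let n = m - a + (\<chi> i. int (b $ i)) in
      f n * (\<Prod>i\<in>UNIV. of_int (\<Prod>j<b $ i. n $ i - int j)))"

definition diff_coeffs :: "((int ^ 'd) \<times> (nat ^ 'd) \<Rightarrow> complex) \<Rightarrow> bool" where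
  "diff_coeffs c \<longleftrightarrow> finite {ab. c ab \<noteq> 0}"

definition diffop :: "((int ^ 'd) \<times> (nat ^ 'd) \<Rightarrow> complex) \<Rightarrow> 'd lpoly \<Rightarrow> 'd lpoly" where
  "diffop c f = (\<lambda>m. \<Sum>ab\<in>{ab. c ab \<noteq> 0}. c ab * mono_op (fst ab) (snd ab) f m)"

text \<open>D(R_A): operators of C[t^{+-1}]<\<partial>> mapping R_A into R_A (elements of the
  Laurent Weyl algebra are identified with the operators they induce, which is faithful).\<close>
definition DR :: "(int ^ 'd) set \<Rightarrow> ('d lpoly \<Rightarrow> 'd lpoly) set" where
  "DR A = {P. \<exists>c. diff_coeffs c \<and> P = diffop c \<and> (\<forall>f\<in>R_A A. P f \<in> R_A A)}"

definition D_ring :: "(int ^ 'd) set \<Rightarrow> ('d lpoly \<Rightarrow> 'd lpoly) ring" where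
  "D_ring A = \<lparr> carrier = DR A, monoid.mult = (\<lambda>P Q. P \<circ> Q), one = id,
                zero = (\<lambda>f m. 0), add = (\<lambda>P Q f m. P f m + Q f m) \<rparr>"

definition simple_ring :: "('a, 'b) ring_scheme \<Rightarrow> bool" where
  "simple_ring R \<longleftrightarrow> (\<forall>I. ideal I R \<longrightarrow> I = {\<zero>\<^bsub>R\<^esub>} \<or> I = carrier R)"

definition to_real :: "int ^ 'd \<Rightarrow> real ^ 'd" where
  "to_real m = (\<chi> i. real_of_int (m $ i))"

definition real_cone :: "(int ^ 'd) set \<Rightarrow> (real ^ 'd) set" where
  "real_cone A = {x. \<exists>c :: int ^ 'd \<Rightarrow> real. (\<forall>a\<in>A. c a \<ge> 0) \<and>
                      x = (\<Sum>a\<in>A. c a *\<^sub>R to_real a)}"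

definition Fform :: "(int ^ 'd) set \<Rightarrow> (real ^ 'd) set \<Rightarrow> real ^ 'd \<Rightarrow> real" where
  "Fform A \<sigma> = (THE F. linear F \<and> (\<forall>x\<in>real_cone A. F x \<ge> 0) \<and> (\<forall>x\<in>\<sigma>. F x = 0)
                      \<and> range (\<lambda>m. F (to_real m)) = \<int>)"

definition scored :: "(int ^ 'd) set \<Rightarrow> bool" where
  "scored A \<longleftrightarrow> semigrp A =
     \<Inter> {{m. Fform A \<sigma> (to_real m) \<in> (\<lambda>n. Fform A \<sigma> (to_real n)) ` semigrp A}
         | \<sigma>. \<sigma> facet_of real_cone A}"

end

theory Submission
  imports Defs "HOL-Computational_Algebra.Polynomial"
begin

text \<open>Let \<open>S\<close> be the scored closure of \<open>\<nat>A\<close>, the set of lattice points \<open>m\<close> with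
  \<open>F\<^sub>\<sigma>(m) \<in> F\<^sub>\<sigma>(\<nat>A)\<close> for every facet \<open>\<sigma>\<close>. Every \<open>P \<in> D(R\<^sub>A)\<close> maps \<open>\<complex>[S]\<close> into itself:
  the coefficient of \<open>t\<^sup>n\<^sup>+\<^sup>s\<close> in \<open>P(t\<^sup>n)\<close> is a polynomial in \<open>n\<close>, and if \<open>n + s\<close> is cut off
  from \<open>S\<close> by the facet \<open>\<sigma>\<close>, this polynomial vanishes on a translate of \<open>\<nat>(A \<inter> \<sigma>)\<close> inside
  \<open>\<nat>A\<close> (there \<open>P(t\<^sup>n) \<in> R\<^sub>A\<close>, while \<open>F\<^sub>\<sigma>(n + s) \<notin> F\<^sub>\<sigma>(\<nat>A)\<close>), hence on the whole
  hyperplane \<open>F\<^sub>\<sigma> = F\<^sub>\<sigma>(n)\<close>. So the operators mapping \<open>\<complex>[S]\<close> into \<open>R\<^sub>A\<close> form a two-sided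
  ideal. It contains the translation by a conductor of \<open>\<nat>A\<close>, so it is nonzero, and it
  misses the identity unless \<open>S = \<nat>A\<close>.\<close>

lemma to_real_nth: "to_real z $ i = of_int (z $ i)"
  by (simp add: to_real_def)

lemma to_real_zero [simp]: "to_real 0 = 0"
  by (simp add: to_real_def vec_eq_iff)

lemma to_real_add: "to_real (x + y) = to_real x + to_real y"
  by (simp add: to_real_def vec_eq_iff)

lemma to_real_diff: "to_real (x - y) = to_real x - to_real y"
  by (simp add: to_real_def vec_eq_iff)

lemma to_real_scale: "to_real (k *s x) = of_int k *\<^sub>R to_real x"
  by (simp add: to_real_def vec_eq_iff)

lemma to_real_sum: "to_real (\<Sum>a\<in>U. g a) = (\<Sum>a\<in>U. to_real (g a))"
  by (induction U rule: infinite_finite_induct) (auto simp: to_real_add)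

lemma to_real_axis: "to_real (axis i 1) = axis i 1"
  by (simp add: to_real_def vec_eq_iff axis_def)

lemma inj_to_real: "inj to_real"
  by (auto simp: inj_def to_real_def vec_eq_iff)

section \<open>Polynomial functions on real vector spaces\<close>

inductive poly_fun :: "(real ^ 'd \<Rightarrow> complex) \<Rightarrow> bool" where
  poly_fun_const: "poly_fun (\<lambda>y. c)"
| poly_fun_add: "poly_fun p \<Longrightarrow> poly_fun q \<Longrightarrow> poly_fun (\<lambda>y. p y + q y)"
| poly_fun_mult: "poly_fun p \<Longrightarrow> poly_fun q \<Longrightarrow> poly_fun (\<lambda>y. p y * q y)"
| poly_fun_coord: "poly_fun (\<lambda>y. of_real (y $ i))"

lemma poly_fun_translate: "poly_fun p \<Longrightarrow> poly_fun (\<lambda>y. p (y + z))"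
proof (induction rule: poly_fun.induct)
  case (poly_fun_coord i)
  have "poly_fun (\<lambda>y. of_real (y $ i) + of_real (z $ i))"
    by (intro poly_fun.intros)
  then show ?case by simp
qed (auto intro: poly_fun.intros)

lemma poly_fun_sum:
  "finite I \<Longrightarrow> (\<And>i. i \<in> I \<Longrightarrow> poly_fun (p i)) \<Longrightarrow> poly_fun (\<lambda>y. \<Sum>i\<in>I. p i y)"
  by (induction I rule: finite_induct) (auto intro: poly_fun.intros)

lemma poly_fun_prod:
  "finite I \<Longrightarrow> (\<And>i. i \<in> I \<Longrightarrow> poly_fun (p i)) \<Longrightarrow> poly_fun (\<lambda>y. \<Prod>i\<in>I. p i y)"
  by (induction I rule: finite_induct) (auto intro: poly_fun.intros)

lemma poly_fun_on_line:
  assumes "poly_fun p"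
  obtains q where "\<And>t. p (u + t *\<^sub>R v) = poly q (of_real t)"
proof -
  from assms have "\<exists>q. \<forall>t. p (u + t *\<^sub>R v) = poly q (of_real t)"
  proof (induction rule: poly_fun.induct)
    case (poly_fun_const c)
    show ?case by (rule exI[of _ "[:c:]"]) simp
  next
    case (poly_fun_add p q)
    then obtain q1 q2 where "\<forall>t. p (u + t *\<^sub>R v) = poly q1 (of_real t)"
      "\<forall>t. q (u + t *\<^sub>R v) = poly q2 (of_real t)" by blast
    then show ?case by (intro exI[of _ "q1 + q2"]) simp
  next
    case (poly_fun_mult p q)
    then obtain q1 q2 where "\<forall>t. p (u + t *\<^sub>R v) = poly q1 (of_real t)"
      "\<forall>t. q (u + t *\<^sub>R v) = poly q2 (of_real t)" by blast
    then show ?case by (intro exI[of _ "q1 * q2"]) simp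
  next
    case (poly_fun_coord i)
    show ?case
      by (rule exI[of _ "[:of_real (u $ i), of_real (v $ i):]"]) (simp add: algebra_simps)
  qed
  then show ?thesis using that by blast
qed

lemma poly_eq_0_if_nat_roots:
  fixes q :: "complex poly"
  assumes "\<And>n::nat. poly q (of_nat n) = 0"
  shows "q = 0"
proof (rule ccontr)
  assume "q \<noteq> 0"
  then have "finite {x. poly q x = 0}" by (rule poly_roots_finite)
  moreover have "(\<nat> :: complex set) \<subseteq> {x. poly q x = 0}"
    using assms by (auto elim: Nats_cases)
  ultimately show False using Nats_infinite finite_subset by blast
qed

text \<open>Induction on \<open>I\<close>: along a line in direction \<open>v j\<close> the function is a univariate
  polynomial, and one vanishing at every natural number is zero.\<close>

lemma poly_fun_vanishes_on_real_combinations: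
  assumes "finite I" "poly_fun p"
    and "\<And>k :: 'i \<Rightarrow> nat. p (w + (\<Sum>i\<in>I. real (k i) *\<^sub>R v i)) = 0"
  shows "p (w + (\<Sum>i\<in>I. r i *\<^sub>R v i)) = 0"
  using assms
proof (induction I arbitrary: p rule: finite_induct)
  case empty
  then show ?case by simp
next
  case (insert j I p)
  let ?x = "w + (\<Sum>i\<in>I. r i *\<^sub>R v i)"
  have nat_roots: "p (?x + real t *\<^sub>R v j) = 0" for t :: nat
  proof -
    have "p (w + (\<Sum>i\<in>I. real (k i) *\<^sub>R v i) + real t *\<^sub>R v j) = 0" for k :: "'i \<Rightarrow> nat"
    proof -
      have "(\<Sum>i\<in>insert j I. real ((k(j := t)) i) *\<^sub>R v i)
          = real t *\<^sub>R v j + (\<Sum>i\<in>I. real (k i) *\<^sub>R v i)"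
        using insert.hyps by (simp add: sum.insert) (intro sum.cong, auto)
      then show ?thesis using insert.prems(2)[of "k(j := t)"] by (simp add: algebra_simps)
    qed
    then show ?thesis
      using insert.IH[of "\<lambda>y. p (y + real t *\<^sub>R v j)"] poly_fun_translate[OF insert.prems(1)]
      by simp
  qed
  obtain q where q: "\<And>t. p (?x + t *\<^sub>R v j) = poly q (of_real t)"
    using poly_fun_on_line[OF insert.prems(1)] by blast
  have "q = 0"
    by (rule poly_eq_0_if_nat_roots) (metis q nat_roots of_real_of_nat_eq)
  then have "p (?x + r j *\<^sub>R v j) = 0" using q by simp
  then show ?case using insert.hyps by (simp add: sum.insert algebra_simps)
qed

section \<open>Differential operators on Laurent polynomials\<close>

definition int_vec :: "nat ^ 'd \<Rightarrow> int ^ 'd" where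
  "int_vec b = (\<chi> i. int (b $ i))"

definition falling_prod :: "real ^ 'd \<Rightarrow> nat ^ 'd \<Rightarrow> complex" where
  "falling_prod y b = (\<Prod>i\<in>UNIV. \<Prod>j<b $ i. of_real (y $ i) - of_nat j)"

text \<open>\<open>euler_shift s p\<close> is the operator \<open>t\<^sup>s p(\<theta>)\<close> built from the Euler operators
  \<open>\<theta>\<^sub>i = t\<^sub>i \<partial>\<^sub>i\<close>: it sends \<open>t\<^sup>n\<close> to \<open>p(n) t\<^sup>n\<^sup>+\<^sup>s\<close>.\<close>

definition euler_shift :: "int ^ 'd \<Rightarrow> (int ^ 'd \<Rightarrow> complex) \<Rightarrow> 'd lpoly \<Rightarrow> 'd lpoly" where
  "euler_shift s p f m = p (m - s) * f (m - s)"

lemma int_vec_zero [simp]: "int_vec 0 = 0"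
  by (simp add: int_vec_def vec_eq_iff)

lemma falling_prod_zero [simp]: "falling_prod y 0 = 1"
  by (simp add: falling_prod_def)

lemma mono_op_apply:
  "mono_op a b f m = f (m - a + int_vec b) * falling_prod (to_real (m - a + int_vec b)) b"
  by (simp add: mono_op_def int_vec_def falling_prod_def to_real_nth of_int_prod Let_def)

lemma mono_op_eq_euler_shift:
  "mono_op a b = euler_shift (a - int_vec b) (\<lambda>n. falling_prod (to_real n) b)"
  by (intro ext) (simp add: mono_op_apply euler_shift_def algebra_simps)

lemma euler_shift_comp:
  "euler_shift s p \<circ> euler_shift t q = euler_shift (s + t) (\<lambda>n. p (n + t) * q n)"
  by (intro ext) (simp add: euler_shift_def algebra_simps)

definition is_diffop :: "(('d::finite) lpoly \<Rightarrow> 'd lpoly) \<Rightarrow> bool" where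
  "is_diffop P \<longleftrightarrow> (\<exists>c. diff_coeffs c \<and> P = diffop c)"

lemma mem_DR_iff: "P \<in> DR A \<longleftrightarrow> is_diffop P \<and> (\<forall>f\<in>R_A A. P f \<in> R_A A)"
  unfolding DR_def is_diffop_def by blast

lemma diffop_eq_sum:
  assumes "finite U" "{ab. c ab \<noteq> 0} \<subseteq> U"
  shows "diffop c f m = (\<Sum>ab\<in>U. c ab * mono_op (fst ab) (snd ab) f m)"
  unfolding diffop_def by (rule sum.mono_neutral_left) (use assms in auto)

lemma is_diffopE:
  assumes "is_diffop P"
  obtains U c where "finite U" "P = (\<lambda>f m. \<Sum>ab\<in>U. c ab * mono_op (fst ab) (snd ab) f m)"
proof -
  obtain c where "diff_coeffs c" "P = diffop c"
    using assms unfolding is_diffop_def by blast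
  then show ?thesis
    by (intro that[of "{ab. c ab \<noteq> 0}" c]) (auto simp: diff_coeffs_def diffop_def)
qed

lemma is_diffop_add:
  assumes "is_diffop P" "is_diffop Q"
  shows "is_diffop (\<lambda>f m. P f m + Q f m)"
proof -
  obtain c d where c: "diff_coeffs c" "P = diffop c" and d: "diff_coeffs d" "Q = diffop d"
    using assms unfolding is_diffop_def by blast
  let ?U = "{ab. c ab \<noteq> 0} \<union> {ab. d ab \<noteq> 0}"
  have U: "finite ?U" using c d by (simp add: diff_coeffs_def)
  have "diff_coeffs (\<lambda>ab. c ab + d ab)"
    unfolding diff_coeffs_def by (rule finite_subset[OF _ U]) auto
  moreover have "P f m + Q f m = diffop (\<lambda>ab. c ab + d ab) f m" for f m
  proof -
    have "diffop (\<lambda>ab. c ab + d ab) f m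
        = (\<Sum>ab\<in>?U. (c ab + d ab) * mono_op (fst ab) (snd ab) f m)"
      by (rule diffop_eq_sum[OF U]) auto
    then show ?thesis using c d diffop_eq_sum[OF U, of c] diffop_eq_sum[OF U, of d]
      by (simp add: distrib_right sum.distrib)
  qed
  ultimately show ?thesis unfolding is_diffop_def by blast
qed

lemma is_diffop_scale:
  assumes "is_diffop P"
  shows "is_diffop (\<lambda>f m. k * P f m)"
proof -
  obtain c where c: "diff_coeffs c" "P = diffop c"
    using assms unfolding is_diffop_def by blast
  let ?U = "{ab. c ab \<noteq> 0}"
  have U: "finite ?U" using c by (simp add: diff_coeffs_def)
  have "diff_coeffs (\<lambda>ab. k * c ab)"
    unfolding diff_coeffs_def by (rule finite_subset[OF _ U]) auto
  moreover have "k * P f m = diffop (\<lambda>ab. k * c ab) f m" for f m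
  proof -
    have "diffop (\<lambda>ab. k * c ab) f m = (\<Sum>ab\<in>?U. k * c ab * mono_op (fst ab) (snd ab) f m)"
      by (rule diffop_eq_sum[OF U]) auto
    then show ?thesis using c diffop_eq_sum[OF U, of c]
      by (simp add: sum_distrib_left mult.assoc)
  qed
  ultimately show ?thesis unfolding is_diffop_def by blast
qed

lemma is_diffop_zero: "is_diffop (\<lambda>f m. 0)"
  unfolding is_diffop_def diff_coeffs_def
  by (rule exI[of _ "\<lambda>_. 0"]) (auto simp: diffop_def)

lemma is_diffop_sum:
  "finite U \<Longrightarrow> (\<And>u. u \<in> U \<Longrightarrow> is_diffop (P u)) \<Longrightarrow> is_diffop (\<lambda>f m. \<Sum>u\<in>U. P u f m)"
  by (induction U rule: finite_induct) (auto intro: is_diffop_zero is_diffop_add)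

lemma is_diffop_mono_op: "is_diffop (mono_op a b)"
proof -
  let ?c = "\<lambda>ab. if ab = (a, b) then 1 else 0"
  have "mono_op a b f m = diffop ?c f m" for f m
    using diffop_eq_sum[of "{(a, b)}" ?c] by simp
  then show ?thesis unfolding is_diffop_def diff_coeffs_def
    by (intro exI[of _ ?c]) auto
qed

lemma is_diffop_id: "is_diffop id"
proof -
  have "id = mono_op 0 0"
    by (intro ext) (simp add: mono_op_apply)
  then show ?thesis using is_diffop_mono_op by metis
qed

lemma is_diffop_additive:
  assumes "is_diffop P"
  shows "P (\<lambda>m. g m + h m) = (\<lambda>m. P g m + P h m)"
proof -
  obtain U c where "P = (\<lambda>f m. \<Sum>ab\<in>U. c ab * mono_op (fst ab) (snd ab) f m)"
    using assms by (rule is_diffopE)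
  then show ?thesis by (simp add: mono_op_apply algebra_simps sum.distrib)
qed

lemma is_diffop_linear_sum:
  assumes "is_diffop P"
  shows "P (\<lambda>m. \<Sum>u\<in>V. k u * g u m) m = (\<Sum>u\<in>V. k u * P (g u) m)"
proof -
  obtain U c where P: "P = (\<lambda>f m. \<Sum>ab\<in>U. c ab * mono_op (fst ab) (snd ab) f m)"
    using assms by (rule is_diffopE)
  have "P (\<lambda>m. \<Sum>u\<in>V. k u * g u m) m
      = (\<Sum>ab\<in>U. \<Sum>u\<in>V. k u * (c ab * mono_op (fst ab) (snd ab) (g u) m))"
    by (simp add: P mono_op_apply sum_distrib_left sum_distrib_right ac_simps)
  also have "\<dots> = (\<Sum>u\<in>V. k u * P (g u) m)"
    by (subst sum.swap) (simp add: P sum_distrib_left)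
  finally show ?thesis .
qed

inductive falling_comb :: "(int ^ 'd \<Rightarrow> complex) \<Rightarrow> bool" where
  falling_comb_falling_prod: "falling_comb (\<lambda>n. falling_prod (to_real n) b)"
| falling_comb_zero: "falling_comb (\<lambda>n. 0)"
| falling_comb_add: "falling_comb p \<Longrightarrow> falling_comb q \<Longrightarrow> falling_comb (\<lambda>n. p n + q n)"
| falling_comb_scale: "falling_comb p \<Longrightarrow> falling_comb (\<lambda>n. k * p n)"

lemma falling_prod_Suc_coord:
  "falling_prod y (b + axis i 1) = falling_prod y b * (of_real (y $ i) - of_nat (b $ i))"
proof -
  have "falling_prod y (b + axis i 1)
      = (\<Prod>j<Suc (b $ i). of_real (y $ i) - of_nat j)
        * (\<Prod>k\<in>UNIV - {i}. \<Prod>j<b $ k. of_real (y $ k) - of_nat j)"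
    unfolding falling_prod_def
    by (subst prod.remove[of _ i]) (auto simp: axis_def intro!: prod.cong)
  also have "\<dots> = falling_prod y b * (of_real (y $ i) - of_nat (b $ i))"
    unfolding falling_prod_def by (subst (2) prod.remove[of _ i]) (auto simp: ac_simps)
  finally show ?thesis .
qed

text \<open>Falling products span the polynomial functions, by the recursion
  \<open>y\<^sub>i * falling_prod y b = falling_prod y (b + e\<^sub>i) + b\<^sub>i * falling_prod y b\<close>.\<close>

lemma falling_comb_mult_coord:
  "falling_comb p \<Longrightarrow> falling_comb (\<lambda>n. of_int (n $ i) * p n)"
proof (induction rule: falling_comb.induct)
  case (falling_comb_falling_prod b)
  have "falling_prod (to_real n) (b + axis i 1) + of_nat (b $ i) * falling_prod (to_real n) b
      = of_int (n $ i) * falling_prod (to_real n) b" for n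
    unfolding falling_prod_Suc_coord by (simp add: to_real_nth algebra_simps)
  moreover have "falling_comb (\<lambda>n. falling_prod (to_real n) (b + axis i 1)
                          + of_nat (b $ i) * falling_prod (to_real n) b)"
    by (intro falling_comb.intros)
  ultimately show ?case by simp
qed (auto simp: algebra_simps intro: falling_comb.intros
          dest: falling_comb_add falling_comb_scale)

lemma falling_comb_mult_poly_fun:
  "poly_fun q \<Longrightarrow> falling_comb r \<Longrightarrow> falling_comb (\<lambda>n. q (to_real n) * r n)"
proof (induction arbitrary: r rule: poly_fun.induct)
  case (poly_fun_add p q)
  then show ?case using falling_comb_add[of "\<lambda>n. p (to_real n) * r n"] by (simp add: distrib_right)
next
  case (poly_fun_mult p q)
  then show ?case using poly_fun_mult.IH(1)[of "\<lambda>n. q (to_real n) * r n"] by (simp add: ac_simps)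
qed (auto simp: to_real_nth intro: falling_comb.intros falling_comb_mult_coord)

lemma falling_comb_poly_fun:
  assumes "poly_fun q"
  shows "falling_comb (\<lambda>n. q (to_real n))"
proof -
  have "falling_comb (\<lambda>n. q (to_real n) * falling_prod (to_real n) 0)"
    using assms by (intro falling_comb_mult_poly_fun falling_comb_falling_prod)
  then show ?thesis by simp
qed

lemma is_diffop_euler_shift_falling_comb:
  "falling_comb p \<Longrightarrow> is_diffop (euler_shift s p)"
proof (induction rule: falling_comb.induct)
  case (falling_comb_falling_prod b)
  then show ?case
    using is_diffop_mono_op[of "s + int_vec b" b] by (simp add: mono_op_eq_euler_shift)
next
  case falling_comb_zero
  then show ?case using is_diffop_zero by (simp add: euler_shift_def[abs_def])
next
  case (falling_comb_add p q)
  then show ?case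
    using is_diffop_add[OF falling_comb_add.IH] by (simp add: euler_shift_def[abs_def] distrib_right)
next
  case (falling_comb_scale p k)
  then show ?case
    using is_diffop_scale[OF falling_comb_scale.IH] by (simp add: euler_shift_def[abs_def] ac_simps)
qed

lemma poly_fun_falling_prod: "poly_fun (\<lambda>y. falling_prod y b)"
proof -
  have "poly_fun (\<lambda>y. of_real (y $ i) + - of_nat j)" for i j
    by (intro poly_fun.intros)
  then show ?thesis unfolding falling_prod_def by (auto intro!: poly_fun_prod)
qed

text \<open>Composition stays of the form \<open>t\<^sup>s q(\<theta>)\<close> because \<open>p(\<theta>) t\<^sup>u = t\<^sup>u p(\<theta> + u)\<close>.\<close>

lemma is_diffop_mono_op_comp: "is_diffop (mono_op a b \<circ> mono_op a' b')"
proof -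
  let ?t = "a' - int_vec b'"
  let ?q = "\<lambda>y. falling_prod (y + to_real ?t) b * falling_prod y b'"
  have "mono_op a b \<circ> mono_op a' b' = euler_shift (a - int_vec b + ?t) (\<lambda>n. ?q (to_real n))"
    unfolding mono_op_eq_euler_shift euler_shift_comp to_real_add ..
  moreover have "is_diffop (euler_shift (a - int_vec b + ?t) (\<lambda>n. ?q (to_real n)))"
    by (intro is_diffop_euler_shift_falling_comb falling_comb_poly_fun poly_fun_mult
        poly_fun_translate poly_fun_falling_prod)
  ultimately show ?thesis by simp
qed

lemma is_diffop_comp:
  assumes "is_diffop P" "is_diffop Q"
  shows "is_diffop (P \<circ> Q)"
proof -
  obtain U c where U: "finite U" and P: "P = (\<lambda>f m. \<Sum>u\<in>U. c u * mono_op (fst u) (snd u) f m)"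
    using assms(1) by (rule is_diffopE)
  obtain V d where V: "finite V" and Q: "Q = (\<lambda>f m. \<Sum>v\<in>V. d v * mono_op (fst v) (snd v) f m)"
    using assms(2) by (rule is_diffopE)
  have "P \<circ> Q = (\<lambda>f m. \<Sum>u\<in>U. \<Sum>v\<in>V.
                   (c u * d v) * (mono_op (fst u) (snd u) \<circ> mono_op (fst v) (snd v)) f m)"
    by (intro ext) (simp add: P Q is_diffop_linear_sum[OF is_diffop_mono_op] sum_distrib_left ac_simps)
  moreover have "is_diffop \<dots>"
    by (intro is_diffop_sum U V is_diffop_scale is_diffop_mono_op_comp)
  ultimately show ?thesis by simp
qed

definition laurent_on :: "(int ^ 'd) set \<Rightarrow> ('d::finite) lpoly set" where
  "laurent_on T = {f. laurent f \<and> {m. f m \<noteq> 0} \<subseteq> T}"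

definition laurent_monom :: "int ^ 'd \<Rightarrow> ('d::finite) lpoly" where
  "laurent_monom n = (\<lambda>m. if m = n then 1 else 0)"

lemma R_A_eq_laurent_on: "R_A A = laurent_on (semigrp A)"
  by (simp add: R_A_def laurent_on_def)

lemma laurent_on_add: "f \<in> laurent_on T \<Longrightarrow> g \<in> laurent_on T \<Longrightarrow> (\<lambda>m. f m + g m) \<in> laurent_on T"
proof -
  assume "f \<in> laurent_on T" "g \<in> laurent_on T"
  moreover have "{m. f m + g m \<noteq> 0} \<subseteq> {m. f m \<noteq> 0} \<union> {m. g m \<noteq> 0}" by auto
  ultimately show ?thesis unfolding laurent_on_def laurent_def by (auto elim!: finite_subset)
qed

lemma laurent_on_uminus: "f \<in> laurent_on T \<Longrightarrow> (\<lambda>m. - f m) \<in> laurent_on T"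
  unfolding laurent_on_def laurent_def by auto

lemma laurent_on_zero: "(\<lambda>m. 0) \<in> laurent_on T"
  unfolding laurent_on_def laurent_def by auto

lemma laurent_monom_support [simp]: "{m. laurent_monom n m \<noteq> 0} = {n}"
  by (auto simp: laurent_monom_def)

lemma laurent_monom_in_laurent_on_iff [simp]: "laurent_monom n \<in> laurent_on T \<longleftrightarrow> n \<in> T"
  by (simp add: laurent_on_def laurent_def)

lemma laurent_eq_sum_monom:
  assumes "laurent f"
  shows "f = (\<lambda>m. \<Sum>n\<in>{n. f n \<noteq> 0}. f n * laurent_monom n m)"
proof
  fix m
  have "(\<Sum>n\<in>{n. f n \<noteq> 0}. f n * laurent_monom n m) = (\<Sum>n\<in>{n. f n \<noteq> 0}. if n = m then f n else 0)"
    by (intro sum.cong) (auto simp: laurent_monom_def)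
  also have "\<dots> = f m" using assms by (simp add: laurent_def)
  finally show "f m = (\<Sum>n\<in>{n. f n \<noteq> 0}. f n * laurent_monom n m)" by simp
qed

lemma is_diffop_apply_laurent:
  assumes "is_diffop Q" "laurent f"
  shows "Q f m = (\<Sum>n\<in>{n. f n \<noteq> 0}. f n * Q (laurent_monom n) m)"
  by (subst laurent_eq_sum_monom[OF assms(2)]) (rule is_diffop_linear_sum[OF assms(1)])

lemma is_diffop_laurent:
  assumes "is_diffop Q" "laurent f"
  shows "laurent (Q f)"
proof -
  obtain U c where U: "finite U" and Q: "Q = (\<lambda>f m. \<Sum>ab\<in>U. c ab * mono_op (fst ab) (snd ab) f m)"
    using assms(1) by (rule is_diffopE)
  have "{m. Q f m \<noteq> 0} \<subseteq> (\<Union>ab\<in>U. (\<lambda>n. n + fst ab - int_vec (snd ab)) ` {n. f n \<noteq> 0})"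
  proof
    fix m assume "m \<in> {m. Q f m \<noteq> 0}"
    then obtain ab where ab: "ab \<in> U" "c ab * mono_op (fst ab) (snd ab) f m \<noteq> 0"
      using Q by (auto intro: sum.not_neutral_contains_not_neutral)
    then have "f (m - fst ab + int_vec (snd ab)) \<noteq> 0" by (auto simp: mono_op_apply)
    then show "m \<in> (\<Union>ab\<in>U. (\<lambda>n. n + fst ab - int_vec (snd ab)) ` {n. f n \<noteq> 0})"
      using ab(1) by (auto intro!: bexI[of _ ab] image_eqI[of _ _ "m - fst ab + int_vec (snd ab)"])
  qed
  moreover have "finite (\<Union>ab\<in>U. (\<lambda>n. n + fst ab - int_vec (snd ab)) ` {n. f n \<noteq> 0})"
    using U assms(2) by (auto simp: laurent_def)
  ultimately show ?thesis unfolding laurent_def by (rule finite_subset)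
qed

lemma D_ring_uminus_closed:
  assumes "P \<in> carrier (D_ring A)"
  shows "(\<lambda>f m. - P f m) \<in> carrier (D_ring A)"
  using assms is_diffop_scale[of P "-1"]
  by (auto simp: D_ring_def mem_DR_iff R_A_eq_laurent_on intro: laurent_on_uminus)

lemma ring_D_ring: "ring (D_ring A)"
proof (rule ringI)
  show "abelian_group (D_ring A)"
  proof (rule abelian_groupI)
    fix x y assume "x \<in> carrier (D_ring A)" "y \<in> carrier (D_ring A)"
    then show "x \<oplus>\<^bsub>D_ring A\<^esub> y \<in> carrier (D_ring A)"
      by (auto simp: D_ring_def mem_DR_iff R_A_eq_laurent_on intro: is_diffop_add laurent_on_add)
  next
    show "\<zero>\<^bsub>D_ring A\<^esub> \<in> carrier (D_ring A)"
      by (auto simp: D_ring_def mem_DR_iff R_A_eq_laurent_on intro: is_diffop_zero laurent_on_zero)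
  next
    fix x assume "x \<in> carrier (D_ring A)"
    then show "\<exists>y\<in>carrier (D_ring A). y \<oplus>\<^bsub>D_ring A\<^esub> x = \<zero>\<^bsub>D_ring A\<^esub>"
      by (intro bexI[OF _ D_ring_uminus_closed]) (auto simp: D_ring_def)
  qed (auto simp: D_ring_def ac_simps)
next
  show "monoid (D_ring A)"
    by (rule monoidI) (auto simp: D_ring_def mem_DR_iff intro: is_diffop_comp is_diffop_id)
next
  fix x y z assume "z \<in> carrier (D_ring A)"
  then have "is_diffop z" by (simp add: D_ring_def mem_DR_iff)
  then show "z \<otimes>\<^bsub>D_ring A\<^esub> (x \<oplus>\<^bsub>D_ring A\<^esub> y) = z \<otimes>\<^bsub>D_ring A\<^esub> x \<oplus>\<^bsub>D_ring A\<^esub> z \<otimes>\<^bsub>D_ring A\<^esub> y"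
    by (simp add: D_ring_def o_def is_diffop_additive)
qed (simp add: D_ring_def o_def)

lemma D_ring_a_inv:
  assumes "P \<in> carrier (D_ring A)"
  shows "\<ominus>\<^bsub>D_ring A\<^esub> P = (\<lambda>f m. - P f m)"
proof -
  interpret ring "D_ring A" by (rule ring_D_ring)
  have "(\<lambda>f m. - P f m) \<oplus>\<^bsub>D_ring A\<^esub> P = \<zero>\<^bsub>D_ring A\<^esub>"
    by (simp add: D_ring_def)
  then show ?thesis using minus_equality assms D_ring_uminus_closed by blast
qed

lemma semigrp_add: "x \<in> semigrp A \<Longrightarrow> y \<in> semigrp A \<Longrightarrow> x + y \<in> semigrp A"
proof -
  assume "x \<in> semigrp A" "y \<in> semigrp A"
  then obtain k l where "x = (\<Sum>a\<in>A. int (k a) *s a)" "y = (\<Sum>a\<in>A. int (l a) *s a)"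
    by (auto simp: semigrp_def)
  moreover have "int (k a + l a) *s a = int (k a) *s a + int (l a) *s a" for a
    by (simp add: vec_eq_iff algebra_simps)
  ultimately have "x + y = (\<Sum>a\<in>A. int (k a + l a) *s a)"
    by (simp add: sum.distrib)
  then show ?thesis unfolding semigrp_def by (intro CollectI exI[of _ "\<lambda>a. k a + l a"])
qed

lemma semigrp_nonneg_int_comb:
  assumes "\<And>a. a \<in> A \<Longrightarrow> h a \<ge> 0"
  shows "(\<Sum>a\<in>A. h a *s a) \<in> semigrp A"
proof -
  have "(\<Sum>a\<in>A. h a *s a) = (\<Sum>a\<in>A. int (nat (h a)) *s a)"
    using assms by (intro sum.cong) auto
  then show ?thesis unfolding semigrp_def by (intro CollectI exI[of _ "\<lambda>a. nat (h a)"])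
qed

lemma semigrp_subset_comb:
  assumes "finite A" "A' \<subseteq> A"
  shows "(\<Sum>a\<in>A'. int (k a) *s a) \<in> semigrp A"
proof -
  have "(\<Sum>a\<in>A'. int (k a) *s a) = (\<Sum>a\<in>A. (if a \<in> A' then int (k a) else 0) *s a)"
    using assms by (intro sum.mono_neutral_cong_left) auto
  also have "\<dots> \<in> semigrp A" by (rule semigrp_nonneg_int_comb) simp
  finally show ?thesis .
qed

lemma convex_cone_nonneg_comb:
  assumes "convex_cone T" "finite B" "\<And>b. b \<in> B \<Longrightarrow> c b \<ge> 0 \<and> v b \<in> T"
  shows "(\<Sum>b\<in>B. c b *\<^sub>R v b) \<in> T"
  using assms(2,3)
proof (induction B rule: finite_induct)
  case empty
  then show ?case using assms(1) by (simp add: convex_cone_contains_0)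
next
  case (insert b B)
  then have "c b *\<^sub>R v b \<in> T" using assms(1) by (simp add: convex_cone_iff)
  then show ?case using insert assms(1) by (simp add: convex_cone_add)
qed

lemma real_cone_eq_convex_cone_hull:
  assumes "finite A"
  shows "real_cone A = convex_cone hull (to_real ` A)"
proof (rule hull_unique[symmetric])
  show "to_real ` A \<subseteq> real_cone A"
  proof
    fix x assume "x \<in> to_real ` A"
    then obtain a where a: "a \<in> A" "x = to_real a" by blast
    have "(\<Sum>b\<in>A. (if b = a then 1 else 0) *\<^sub>R to_real b) = (\<Sum>b\<in>A. if b = a then x else 0)"
      using a by (intro sum.cong) auto
    also have "\<dots> = x" using a assms by simp
    finally have "x = (\<Sum>b\<in>A. (if b = a then 1 else 0) *\<^sub>R to_real b)" ..
    then show "x \<in> real_cone A"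
      unfolding real_cone_def by (intro CollectI exI[of _ "\<lambda>b. if b = a then 1 else 0"]) simp
  qed
next
  show "convex_cone (real_cone A)"
    unfolding convex_cone_iff
  proof (intro conjI ballI allI impI)
    show "0 \<in> real_cone A"
      unfolding real_cone_def by (intro CollectI exI[of _ "\<lambda>_. 0"]) simp
  next
    fix x y assume "x \<in> real_cone A" "y \<in> real_cone A"
    then obtain c d where "\<forall>a\<in>A. c a \<ge> 0" "x = (\<Sum>a\<in>A. c a *\<^sub>R to_real a)"
       "\<forall>a\<in>A. d a \<ge> 0" "y = (\<Sum>a\<in>A. d a *\<^sub>R to_real a)"
      unfolding real_cone_def by blast
    then show "x + y \<in> real_cone A" unfolding real_cone_def
      by (intro CollectI exI[of _ "\<lambda>a. c a + d a"]) (auto simp: sum.distrib scaleR_add_left)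
  next
    fix x and t :: real assume "x \<in> real_cone A" "0 \<le> t"
    then obtain c where "\<forall>a\<in>A. c a \<ge> 0" "x = (\<Sum>a\<in>A. c a *\<^sub>R to_real a)"
      unfolding real_cone_def by blast
    then show "t *\<^sub>R x \<in> real_cone A" using \<open>0 \<le> t\<close> unfolding real_cone_def
      by (intro CollectI exI[of _ "\<lambda>a. t * c a"]) (auto simp: scaleR_sum_right)
  qed
next
  fix T assume "to_real ` A \<subseteq> T" "convex_cone T"
  then show "real_cone A \<subseteq> T"
    unfolding real_cone_def using assms by (auto intro: convex_cone_nonneg_comb)
qed

lemma polyhedron_real_cone: "finite A \<Longrightarrow> polyhedron (real_cone A)"
  by (simp add: real_cone_eq_convex_cone_hull polyhedron_convex_cone_hull)

lemma convex_cone_real_cone: "finite A \<Longrightarrow> convex_cone (real_cone A)"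
  by (simp add: real_cone_eq_convex_cone_hull convex_cone_convex_cone_hull)

lemma generator_in_real_cone: "finite A \<Longrightarrow> a \<in> A \<Longrightarrow> to_real a \<in> real_cone A"
  by (simp add: real_cone_eq_convex_cone_hull hull_inc)

lemma semigrp_in_real_cone:
  assumes "finite A" "m \<in> semigrp A"
  shows "to_real m \<in> real_cone A"
proof -
  obtain k where "m = (\<Sum>a\<in>A. int (k a) *s a)" using assms by (auto simp: semigrp_def)
  then have "to_real m = (\<Sum>a\<in>A. real (k a) *\<^sub>R to_real a)"
    by (simp add: to_real_sum to_real_scale)
  then show ?thesis unfolding real_cone_def by (intro CollectI exI[of _ "\<lambda>a. real (k a)"]) simp
qed

lemma span_generators_eq_UNIV:
  assumes "grp A = UNIV"
  shows "span (to_real ` A) = UNIV"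
proof -
  have "axis i 1 \<in> span (to_real ` A)" for i
  proof -
    obtain k where "axis i (1::int) = (\<Sum>a\<in>A. k a *s a)"
      using assms by (auto simp: grp_def set_eq_iff)
    from arg_cong[OF this, of to_real]
    have "axis i (1::real) = (\<Sum>a\<in>A. of_int (k a) *\<^sub>R to_real a)"
      by (simp add: to_real_sum to_real_scale to_real_axis)
    also have "\<dots> \<in> span (to_real ` A)"
      by (intro span_sum span_mul span_base) auto
    finally show ?thesis .
  qed
  then have "span Basis \<subseteq> span (to_real ` A)"
    by (intro span_minimal) (auto simp: Basis_vec_def cart_basis_def)
  then show ?thesis by (auto simp: span_Basis)
qed

lemma affine_hull_real_cone:
  assumes "finite A" "grp A = UNIV"
  shows "affine hull (real_cone A) = UNIV"
proof -
  have "0 \<in> real_cone A" using convex_cone_real_cone[OF assms(1)] by (rule convex_cone_contains_0)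
  then have "affine hull (real_cone A) = span (real_cone A)"
    by (intro affine_hull_span_0 hull_inc)
  moreover have "span (to_real ` A) \<subseteq> span (real_cone A)"
    by (intro span_mono) (auto intro: generator_in_real_cone[OF assms(1)])
  ultimately show ?thesis using span_generators_eq_UNIV[OF assms(2)] by auto
qed

section \<open>Facets of the cone and their primitive forms\<close>

lemma linear_form_proportional:
  fixes f g :: "'a::real_vector \<Rightarrow> real"
  assumes "linear f" "linear g" "\<And>x. f x = 0 \<Longrightarrow> g x = 0" "f w = 1"
  shows "g x = g w * f x"
proof -
  have "f (x - f x *\<^sub>R w) = 0"
    using assms by (simp add: linear_diff linear_scale)
  then have "g (x - f x *\<^sub>R w) = 0" by (rule assms(3))
  then show ?thesis using assms(2) by (simp add: linear_diff linear_scale)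
qed

lemma convex_cone_supporting_hyperplane_through_0:
  assumes "convex_cone K" "K \<subseteq> {x. a \<bullet> x \<le> b}" "x \<in> K" "a \<bullet> x = b"
  shows "b = 0"
proof -
  have "0 \<le> b" using assms(1,2) convex_cone_contains_0 by fastforce
  moreover have "2 *\<^sub>R x \<in> K" using assms(1,3) by (simp add: convex_cone_iff)
  then have "2 * b \<le> b" using assms(2,4) by (auto simp: inner_scaleR_right)
  ultimately show ?thesis by simp
qed

lemma facet_of_real_cone_normal:
  assumes "finite A" "\<sigma> facet_of real_cone A"
  obtains a where "a \<noteq> 0" "real_cone A \<subseteq> {x. 0 \<le> a \<bullet> x}" "\<sigma> = real_cone A \<inter> {x. a \<bullet> x = 0}"
proof -
  obtain a b where ab: "a \<noteq> 0" "real_cone A \<subseteq> {x. a \<bullet> x \<le> b}" "\<sigma> = real_cone A \<inter> {x. a \<bullet> x = b}"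
    using facet_of_polyhedron[OF polyhedron_real_cone[OF assms(1)] assms(2)] by metis
  obtain x where "x \<in> \<sigma>" using assms(2) by (auto simp: facet_of_def)
  then have "b = 0"
    using ab convex_cone_real_cone[OF assms(1)] by (intro convex_cone_supporting_hyperplane_through_0) auto
  with ab show ?thesis by (intro that[of "- a"]) auto
qed

lemma real_cone_inter_hyperplane_subset_span:
  assumes "finite A" "real_cone A \<subseteq> {x. 0 \<le> a \<bullet> x}" "x \<in> real_cone A" "a \<bullet> x = 0"
  shows "x \<in> span (to_real ` {a'\<in>A. a \<bullet> to_real a' = 0})"
proof -
  obtain c where c: "\<forall>a'\<in>A. c a' \<ge> 0" "x = (\<Sum>a'\<in>A. c a' *\<^sub>R to_real a')"
    using assms(3) unfolding real_cone_def by blast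
  have nonneg: "\<forall>a'\<in>A. 0 \<le> c a' * (a \<bullet> to_real a')"
    using c(1) assms(2) generator_in_real_cone[OF assms(1)] by (auto intro!: mult_nonneg_nonneg)
  have "(\<Sum>a'\<in>A. c a' * (a \<bullet> to_real a')) = 0"
    using c(2) assms(4) by (simp add: inner_sum_right)
  then have "\<forall>a'\<in>A. c a' * (a \<bullet> to_real a') = 0"
    using nonneg by (simp add: sum_nonneg_eq_0_iff[OF assms(1)])
  then have "c a' *\<^sub>R to_real a' \<in> span (to_real ` {a'\<in>A. a \<bullet> to_real a' = 0})" if "a' \<in> A" for a'
    using that by (cases "c a' = 0") (auto intro: span_mul span_base span_zero)
  then show ?thesis unfolding c(2) by (intro span_sum) auto
qed

lemma span_facet_generators:
  fixes A :: "(int ^ 'd) set"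
  assumes fin: "finite A" and grp: "grp A = UNIV" and a: "a \<noteq> 0"
    and cone: "real_cone A \<subseteq> {x. 0 \<le> a \<bullet> x}" and \<sigma>: "\<sigma> = real_cone A \<inter> {x. a \<bullet> x = 0}"
    and facet: "\<sigma> facet_of real_cone A"
  shows "span (to_real ` {a'\<in>A. a \<bullet> to_real a' = 0}) = {x. a \<bullet> x = 0}"
proof -
  let ?S = "span (to_real ` {a'\<in>A. a \<bullet> to_real a' = 0})"
  have "0 \<in> \<sigma>" using \<sigma> convex_cone_contains_0[OF convex_cone_real_cone[OF fin]] by simp
  then have "int (dim \<sigma>) = aff_dim \<sigma>" by (intro aff_dim_zero[symmetric] hull_inc)
  also have "\<dots> = int CARD('d) - 1"
    using facet affine_hull_real_cone[OF fin grp] aff_dim_eq_full[of "real_cone A"]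
    by (simp add: facet_of_def)
  finally have "dim \<sigma> = CARD('d) - 1" by arith
  moreover have "\<sigma> \<subseteq> ?S"
    using real_cone_inter_hyperplane_subset_span[OF fin cone] \<sigma> by blast
  then have "dim \<sigma> \<le> dim ?S" by (rule dim_subset)
  ultimately have "dim {x. a \<bullet> x = 0} \<le> dim ?S"
    using dim_hyperplane[OF a] by simp
  moreover have "?S \<subseteq> {x. a \<bullet> x = 0}"
    by (rule span_minimal) (auto intro: subspace_hyperplane)
  ultimately show ?thesis
    using subspace_dim_equal[OF subspace_span subspace_hyperplane] by blast
qed

lemma det_in_Ints:
  fixes M :: "real ^ 'n ^ 'n"
  assumes "\<And>i j. M $ i $ j \<in> \<int>"
  shows "det M \<in> \<int>"
  unfolding det_def by (intro Ints_sum Ints_mult Ints_prod assms) auto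

text \<open>The form is the determinant against a basis of the hyperplane consisting of lattice points.\<close>

lemma integral_form_of_lattice_hyperplane:
  fixes a :: "real ^ 'd"
  assumes a: "a \<noteq> 0" and span: "span (to_real ` Z) = {x. a \<bullet> x = 0}"
  obtains \<phi> :: "real ^ 'd \<Rightarrow> real" where "linear \<phi>" "\<And>z. \<phi> (to_real z) \<in> \<int>"
    "\<And>x. a \<bullet> x = 0 \<Longrightarrow> \<phi> x = 0" "\<phi> a \<noteq> 0"
proof -
  obtain B where B: "B \<subseteq> to_real ` Z" "independent B" "to_real ` Z \<subseteq> span B"
      "card B = dim (to_real ` Z)"
    by (rule basis_exists)
  have spanB: "span B = {x. a \<bullet> x = 0}"
  proof
    show "span B \<subseteq> {x. a \<bullet> x = 0}" using span_mono[OF B(1)] span by blast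
    show "{x. a \<bullet> x = 0} \<subseteq> span B" using span_mono[OF B(3)] span by (simp add: span_span)
  qed
  have finB: "finite B" using B(2) by (rule finiteI_independent)
  have cardB: "card B = CARD('d) - 1"
    using B(4) dim_span[of "to_real ` Z"] span dim_hyperplane[OF a] by simp
  obtain j0 :: 'd where True by blast
  have "card (UNIV - {j0}) = card B" using cardB by (simp add: card_Diff_singleton)
  then obtain \<beta> where bij: "bij_betw \<beta> (UNIV - {j0}) B"
    using finite_same_card_bij[OF _ finB] finite by metis
  define M where "M x = (\<chi> i. if i = j0 then x else \<beta> i)" for x :: "real ^ 'd"
  define \<phi> where "\<phi> x = det (M x)" for x
  have lin: "linear \<phi>"
  proof (rule linearI)
    fix x y
    show "\<phi> (x + y) = \<phi> x + \<phi> y"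
      using det_row_add[of j0 "\<lambda>_. x" "\<lambda>_. y" \<beta>] by (simp add: \<phi>_def M_def)
  next
    fix c :: real and x :: "real ^ 'd"
    have "c *s x = c *\<^sub>R x" by (simp add: vec_eq_iff)
    then show "\<phi> (c *\<^sub>R x) = c *\<^sub>R \<phi> x"
      using det_row_mul[of j0 c "\<lambda>_. x" \<beta>] by (simp only: \<phi>_def M_def) simp
  qed
  have "\<phi> (to_real z) \<in> \<int>" for z
    unfolding \<phi>_def
  proof (rule det_in_Ints)
    fix i j
    show "M (to_real z) $ i $ j \<in> \<int>"
    proof (cases "i = j0")
      case False
      then have "\<beta> i \<in> to_real ` Z" using B(1) bij by (auto simp: bij_betw_def)
      then show ?thesis using False by (auto simp: M_def to_real_nth)
    qed (simp add: M_def to_real_nth)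
  qed
  moreover have "\<phi> x = 0" if "a \<bullet> x = 0" for x
  proof -
    have "\<phi> b = 0" if "b \<in> B" for b
    proof -
      obtain j where j: "j \<noteq> j0" "b = \<beta> j"
        using bij \<open>b \<in> B\<close> by (auto simp: bij_betw_def)
      then have "row j (M b) = row j0 (M b)" by (simp add: row_def M_def vec_nth_inverse)
      then show ?thesis unfolding \<phi>_def using j by (intro det_identical_rows[of j j0]) auto
    qed
    then show ?thesis using linear_eq_0_on_span[OF lin] that spanB by blast
  qed
  moreover have "\<phi> a \<noteq> 0"
  proof -
    have rows: "rows (M a) = insert a B"
      using bij by (auto simp: rows_def row_def M_def vec_nth_inverse bij_betw_def)
    have "a \<notin> span B" using spanB a by simp
    then have "independent (insert a B)" "a \<notin> B"
      using B(2) independent_insertI span_base by blast+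
    then have "dim (insert a B) = card (insert a B)"
      using dim_eq_card_independent by blast
    also have "\<dots> = CARD('d)"
      using \<open>a \<notin> B\<close> finB cardB finite_UNIV_card_ge_0[where 'a='d] by simp
    finally have "rank (M a) = CARD('d)" by (simp add: row_rank_def rows)
    then show ?thesis unfolding \<phi>_def using det_eq_0_rank[of "M a"] by simp
  qed
  ultimately show ?thesis using lin that by blast
qed

lemma int_subgroup_eq_multiples:
  fixes \<Gamma> :: "int set"
  assumes closed: "\<And>x y t. x \<in> \<Gamma> \<Longrightarrow> y \<in> \<Gamma> \<Longrightarrow> x - t * y \<in> \<Gamma>" and "k \<in> \<Gamma>" "k \<noteq> 0"
  obtains g where "g > 0" "\<Gamma> = range (\<lambda>q. g * q)"
proof -
  define g where "g = int (LEAST n. 0 < n \<and> int n \<in> \<Gamma>)"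
  have "0 \<in> \<Gamma>" using closed[of k k 1] \<open>k \<in> \<Gamma>\<close> by simp
  then have "\<bar>k\<bar> \<in> \<Gamma>" using closed[of 0 k "- sgn k"] \<open>k \<in> \<Gamma>\<close> by (simp add: abs_sgn mult.commute)
  then have "0 < nat \<bar>k\<bar> \<and> int (nat \<bar>k\<bar>) \<in> \<Gamma>" using \<open>k \<noteq> 0\<close> by simp
  then have "0 < (LEAST n. 0 < n \<and> int n \<in> \<Gamma>) \<and> int (LEAST n. 0 < n \<and> int n \<in> \<Gamma>) \<in> \<Gamma>"
    by (rule LeastI)
  then have g: "0 < g" "g \<in> \<Gamma>" unfolding g_def by auto
  have least: "g \<le> int n" if "0 < n" "int n \<in> \<Gamma>" for n
    using Least_le[of "\<lambda>n. 0 < n \<and> int n \<in> \<Gamma>" n] that unfolding g_def by auto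
  have "g dvd x" if "x \<in> \<Gamma>" for x
  proof -
    have "x mod g \<in> \<Gamma>" using closed[OF that g(2), of "x div g"] by (simp add: minus_div_mult_eq_mod)
    moreover have "0 \<le> x mod g" "x mod g < g" using g(1) by simp_all
    ultimately have "x mod g = 0" using least[of "nat (x mod g)"] by fastforce
    then show ?thesis by (simp add: dvd_eq_mod_eq_0)
  qed
  moreover have "g * q \<in> \<Gamma>" for q using closed[OF \<open>0 \<in> \<Gamma>\<close> g(2), of "- q"] by (simp add: mult.commute)
  ultimately have "\<Gamma> = range (\<lambda>q. g * q)" by (auto elim!: dvdE)
  with g(1) show ?thesis by (rule that)
qed

lemma primitive_form_of_lattice_hyperplane:
  fixes a :: "real ^ 'd"
  assumes a: "a \<noteq> 0" and span: "span (to_real ` Z) = {x. a \<bullet> x = 0}"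
  obtains c where "c > 0" "range (\<lambda>m. c * (a \<bullet> to_real m)) = \<int>"
proof -
  obtain \<phi> :: "real ^ 'd \<Rightarrow> real" where \<phi>: "linear \<phi>" "\<And>z. \<phi> (to_real z) \<in> \<int>"
      "\<And>x. a \<bullet> x = 0 \<Longrightarrow> \<phi> x = 0" "\<phi> a \<noteq> 0"
    using integral_form_of_lattice_hyperplane[OF a span] by blast
  define \<mu> where "\<mu> = \<phi> a / (a \<bullet> a)"
  have "linear (\<lambda>x. (a \<bullet> x) / (a \<bullet> a))"
    by (intro linearI) (auto simp: inner_add_right add_divide_distrib)
  then have \<phi>_eq: "\<phi> x = \<mu> * (a \<bullet> x)" for x
    using linear_form_proportional[of "\<lambda>x. (a \<bullet> x) / (a \<bullet> a)" \<phi> a x] \<phi>(1,3) a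
    by (simp add: \<mu>_def)
  have "\<mu> \<noteq> 0" using \<phi>(4) a by (simp add: \<mu>_def)
  define s :: int where "s = (if \<mu> > 0 then 1 else -1)"
  have s: "of_int s * \<mu> = \<bar>\<mu>\<bar>" "of_int s * of_int s = (1::real)" by (auto simp: s_def)
  define \<Gamma> where "\<Gamma> = {k. \<exists>z. \<phi> (to_real z) = of_int k}"
  have \<phi>_int: "\<exists>k. \<phi> (to_real z) = of_int k" for z using \<phi>(2)[of z] by (auto elim: Ints_cases)
  have "\<exists>z. \<phi> (to_real z) \<noteq> 0"
  proof (rule ccontr)
    assume "\<not> ?thesis"
    then have "\<phi> b = 0" if "b \<in> Basis" for b
      using that by (auto simp: Basis_vec_def to_real_axis[symmetric])
    then have "\<phi> a = 0" using linear_eq_0_on_span[OF \<phi>(1), of Basis a] by (simp add: span_Basis)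
    with \<phi>(4) show False ..
  qed
  then obtain k where "k \<in> \<Gamma>" "k \<noteq> 0" using \<phi>_int unfolding \<Gamma>_def by fastforce
  moreover have "k1 - t * k2 \<in> \<Gamma>" if k: "k1 \<in> \<Gamma>" "k2 \<in> \<Gamma>" for k1 k2 t
  proof -
    obtain z1 z2 where "\<phi> (to_real z1) = of_int k1" "\<phi> (to_real z2) = of_int k2"
      using k unfolding \<Gamma>_def by blast
    then have "\<phi> (to_real (z1 - t *s z2)) = of_int (k1 - t * k2)"
      using \<phi>(1) by (simp add: to_real_diff to_real_scale linear_diff linear_scale)
    then show ?thesis unfolding \<Gamma>_def by blast
  qed
  ultimately obtain g where g: "g > 0" "\<Gamma> = range (\<lambda>q. g * q)"
    using int_subgroup_eq_multiples by metis
  define c where "c = \<bar>\<mu>\<bar> / of_int g"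
  have c_eq: "c * (a \<bullet> x) = of_int s * \<phi> x / of_int g" for x
    by (simp add: c_def \<phi>_eq flip: s(1))
  have "range (\<lambda>m. c * (a \<bullet> to_real m)) = \<int>"
  proof (intro equalityI subsetI)
    fix y assume "y \<in> range (\<lambda>m. c * (a \<bullet> to_real m))"
    then obtain m where y: "y = c * (a \<bullet> to_real m)" by blast
    obtain k where k: "\<phi> (to_real m) = of_int k" using \<phi>_int by blast
    then have "k \<in> range (\<lambda>q. g * q)" using g(2) unfolding \<Gamma>_def by blast
    then obtain q where "k = g * q" by blast
    then show "y \<in> \<int>" using y k g(1) by (simp add: c_eq)
  next
    fix y :: real assume "y \<in> \<int>"
    then obtain j where j: "y = of_int j" by (auto elim: Ints_cases)
    have "g * (s * j) \<in> \<Gamma>" using g(2) by blast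
    then obtain m where m: "\<phi> (to_real m) = of_int (g * (s * j))" unfolding \<Gamma>_def by blast
    have "c * (a \<bullet> to_real m) = of_int s * of_int (g * (s * j)) / of_int g"
      by (simp only: c_eq m)
    also have "\<dots> = y" using g(1) j s(2) by simp
    finally show "y \<in> range (\<lambda>m. c * (a \<bullet> to_real m))" by (rule range_eqI[OF sym])
  qed
  moreover have "c > 0" using \<open>\<mu> \<noteq> 0\<close> g(1) by (simp add: c_def)
  ultimately show ?thesis using that by blast
qed

lemma linear_form_eq_if_same_lattice_range:
  fixes F G :: "real ^ 'd \<Rightarrow> real"
  assumes "linear F" "linear G" "\<And>x. F x = 0 \<Longrightarrow> G x = 0"
    and F_range: "range (\<lambda>m. F (to_real m)) = \<int>" and G_range: "range (\<lambda>m. G (to_real m)) = \<int>"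
    and "F x0 > 0" "G x0 \<ge> 0"
  shows "G = F"
proof -
  obtain w where w: "F (to_real w) = 1" using F_range by (metis Ints_1 rangeE)
  let ?\<mu> = "G (to_real w)"
  have GF: "G x = ?\<mu> * F x" for x by (rule linear_form_proportional) (use assms w in auto)
  obtain p where p: "?\<mu> = of_int p" using G_range by (metis Ints_cases rangeI)
  obtain z where z: "G (to_real z) = 1" using G_range by (metis Ints_1 rangeE)
  obtain q where q: "F (to_real z) = of_int q" using F_range by (metis Ints_cases rangeI)
  have "of_int (p * q) = (1 :: real)" using z GF[of "to_real z"] p q by simp
  then have "p * q = 1" by (simp only: of_int_eq_1_iff)
  then have "p = 1 \<or> p = -1" using zmult_eq_1_iff by blast
  moreover have "0 \<le> ?\<mu>" using GF[of x0] assms(6,7) by (simp add: zero_le_mult_iff)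
  ultimately have "?\<mu> = 1" using p by auto
  then have "G x = F x" for x using GF[of x] by simp
  then show "G = F" by (simp add: fun_eq_iff)
qed

lemma Fform_facet:
  fixes A :: "(int ^ 'd) set"
  assumes fin: "finite A" and grp: "grp A = UNIV" and a: "a \<noteq> 0"
    and cone: "real_cone A \<subseteq> {x. 0 \<le> a \<bullet> x}" and \<sigma>: "\<sigma> = real_cone A \<inter> {x. a \<bullet> x = 0}"
    and facet: "\<sigma> facet_of real_cone A"
  obtains c where "c > 0" "Fform A \<sigma> = (\<lambda>x. c * (a \<bullet> x))"
proof -
  let ?A' = "{a'\<in>A. a \<bullet> to_real a' = 0}"
  have span: "span (to_real ` ?A') = {x. a \<bullet> x = 0}"
    by (rule span_facet_generators[OF fin grp a cone \<sigma> facet])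
  obtain c where c: "c > 0" "range (\<lambda>m. c * (a \<bullet> to_real m)) = \<int>"
    using primitive_form_of_lattice_hyperplane[OF a span] by blast
  define F where "F x = c * (a \<bullet> x)" for x
  have linF: "linear F" unfolding F_def by (intro linearI) (auto simp: algebra_simps)
  have "\<exists>a0\<in>A. a \<bullet> to_real a0 \<noteq> 0"
  proof (rule ccontr)
    assume "\<not> ?thesis"
    then have "a \<bullet> x = 0" if "x \<in> span (to_real ` A)" for x
      using linear_eq_0_on_span[OF bounded_linear_inner_right[THEN bounded_linear.linear] _ that] by auto
    then have "a \<bullet> a = 0" using span_generators_eq_UNIV[OF grp] by blast
    then show False using a by simp
  qed
  then obtain a0 where "a0 \<in> A" "F (to_real a0) > 0"
    using cone generator_in_real_cone[OF fin] c(1) unfolding F_def by (force simp: less_le)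
  have F: "linear F \<and> (\<forall>x\<in>real_cone A. F x \<ge> 0) \<and> (\<forall>x\<in>\<sigma>. F x = 0)
      \<and> range (\<lambda>m. F (to_real m)) = \<int>"
    using linF cone \<sigma> c unfolding F_def by auto
  have "G = F" if G: "linear G \<and> (\<forall>x\<in>real_cone A. G x \<ge> 0) \<and> (\<forall>x\<in>\<sigma>. G x = 0)
      \<and> range (\<lambda>m. G (to_real m)) = \<int>" for G
  proof (rule linear_form_eq_if_same_lattice_range)
    show "G x = 0" if "F x = 0" for x
    proof -
      have "x \<in> span (to_real ` ?A')" using that c(1) span unfolding F_def by simp
      moreover have "to_real ` ?A' \<subseteq> \<sigma>" using \<sigma> generator_in_real_cone[OF fin] by auto
      ultimately show ?thesis using G linear_eq_0_on_span[of G] by blast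
    qed
    show "G (to_real a0) \<ge> 0" using G generator_in_real_cone[OF fin \<open>a0 \<in> A\<close>] by blast
  qed (use F G \<open>F (to_real a0) > 0\<close> in auto)
  then have "Fform A \<sigma> = F" unfolding Fform_def using F by (intro the_equality) blast+
  then show ?thesis using c(1) that unfolding F_def by blast
qed

lemma facet_Fform_cases:
  fixes A :: "(int ^ 'd) set"
  assumes fin: "finite A" and grp: "grp A = UNIV" and facet: "\<sigma> facet_of real_cone A"
  obtains a c where "a \<noteq> 0" "c > 0" "real_cone A \<subseteq> {x. 0 \<le> a \<bullet> x}"
    "\<sigma> = real_cone A \<inter> {x. a \<bullet> x = 0}" "Fform A \<sigma> = (\<lambda>x. c * (a \<bullet> x))"
proof -
  obtain a where a: "a \<noteq> 0" "real_cone A \<subseteq> {x. 0 \<le> a \<bullet> x}" "\<sigma> = real_cone A \<inter> {x. a \<bullet> x = 0}"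
    using facet_of_real_cone_normal[OF fin facet] by blast
  with Fform_facet[OF fin grp a facet] that show ?thesis by blast
qed

lemma linear_Fform:
  assumes "finite A" "grp A = UNIV" "\<sigma> facet_of real_cone A"
  shows "linear (Fform A \<sigma>)"
proof -
  obtain a c where "Fform A \<sigma> = (\<lambda>x. c * (a \<bullet> x))"
    using facet_Fform_cases[OF assms] by blast
  then show ?thesis by (auto intro!: linearI simp: algebra_simps)
qed

lemma Fform_nonneg:
  assumes "finite A" "grp A = UNIV" "\<sigma> facet_of real_cone A" "x \<in> real_cone A"
  shows "0 \<le> Fform A \<sigma> x"
proof -
  obtain a c where "c > 0" "real_cone A \<subseteq> {x. 0 \<le> a \<bullet> x}" "Fform A \<sigma> = (\<lambda>x. c * (a \<bullet> x))"
    using facet_Fform_cases[OF assms(1-3)] by blast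
  with assms(4) show ?thesis by auto
qed

lemma Fform_kernel_subset_span:
  assumes "finite A" "grp A = UNIV" "\<sigma> facet_of real_cone A"
  shows "{x. Fform A \<sigma> x = 0} \<subseteq> span (to_real ` {a'\<in>A. Fform A \<sigma> (to_real a') = 0})"
proof -
  obtain a c where a: "a \<noteq> 0" "c > 0" "real_cone A \<subseteq> {x. 0 \<le> a \<bullet> x}"
      "\<sigma> = real_cone A \<inter> {x. a \<bullet> x = 0}" "Fform A \<sigma> = (\<lambda>x. c * (a \<bullet> x))"
    using facet_Fform_cases[OF assms] by blast
  then have "Fform A \<sigma> x = 0 \<longleftrightarrow> a \<bullet> x = 0" for x by simp
  then show ?thesis
    using span_facet_generators[OF assms(1,2) a(1,3,4) assms(3)] by simp
qed

lemma exists_facet_Fform_neg: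
  fixes A :: "(int ^ 'd) set"
  assumes fin: "finite A" and grp: "grp A = UNIV" and x: "x \<notin> real_cone A"
  obtains \<sigma> where "\<sigma> facet_of real_cone A" "Fform A \<sigma> x < 0"
proof -
  let ?K = "real_cone A"
  obtain \<F> where \<F>: "finite \<F>" "?K = affine hull ?K \<inter> \<Inter>\<F>"
      "\<forall>h\<in>\<F>. \<exists>a b. a \<noteq> 0 \<and> h = {x. a \<bullet> x \<le> b}"
      "\<And>\<F>'. \<F>' \<subset> \<F> \<Longrightarrow> ?K \<subset> affine hull ?K \<inter> \<Inter>\<F>'"
    using polyhedron_real_cone[OF fin, unfolded polyhedron_Int_affine_minimal] by blast
  obtain a b where ab: "\<And>h. h \<in> \<F> \<Longrightarrow> a h \<noteq> 0 \<and> h = {x. a h \<bullet> x \<le> b h}"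
    using \<F>(3) by metis
  have "x \<notin> \<Inter>\<F>" using x \<F>(2) affine_hull_real_cone[OF fin grp] by auto
  then obtain h where h: "h \<in> \<F>" "x \<notin> h" by blast
  let ?\<sigma> = "?K \<inter> {x. a h \<bullet> x = b h}"
  have facet: "?\<sigma> facet_of ?K"
    using facet_of_polyhedron_explicit[OF \<F>(1,2) ab \<F>(4)] h(1) by blast
  have cone: "?K \<subseteq> {x. a h \<bullet> x \<le> b h}" using \<F>(2) h(1) ab[OF h(1)] by blast
  obtain y where "y \<in> ?\<sigma>" using facet by (auto simp: facet_of_def)
  then have "b h = 0"
    using cone convex_cone_real_cone[OF fin] by (intro convex_cone_supporting_hyperplane_through_0) auto
  then have "- a h \<noteq> 0" "?K \<subseteq> {y. 0 \<le> - a h \<bullet> y}" "?\<sigma> = ?K \<inter> {y. - a h \<bullet> y = 0}"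
    using ab[OF h(1)] cone by auto
  then obtain c where "c > 0" "Fform A ?\<sigma> = (\<lambda>y. c * (- a h \<bullet> y))"
    using Fform_facet[OF fin grp _ _ _ facet] by blast
  moreover have "0 < a h \<bullet> x" using h ab[OF h(1)] \<open>b h = 0\<close> by auto
  ultimately have "Fform A ?\<sigma> x < 0" by (simp add: mult_pos_neg)
  with facet show ?thesis by (rule that)
qed

section \<open>A conductor of the semigroup\<close>

lemma cone_lattice_point_near_semigrp:
  assumes "finite A" "to_real m \<in> real_cone A"
  obtains k :: "int ^ 'd \<Rightarrow> int" where "\<And>a. a \<in> A \<Longrightarrow> k a \<ge> 0"
    "\<And>i. \<bar>(m - (\<Sum>a\<in>A. k a *s a)) $ i\<bar> \<le> (\<Sum>a\<in>A. \<bar>a $ i\<bar>)"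
proof -
  obtain l where l: "\<forall>a\<in>A. l a \<ge> 0" "to_real m = (\<Sum>a\<in>A. l a *\<^sub>R to_real a)"
    using assms(2) unfolding real_cone_def by blast
  define k where "k a = \<lfloor>l a\<rfloor>" for a
  have frac: "0 \<le> l a - of_int (k a)" "l a - of_int (k a) \<le> 1" for a
    by (simp_all add: k_def) linarith
  define y where "y = m - (\<Sum>a\<in>A. k a *s a)"
  have y: "to_real y = (\<Sum>a\<in>A. (l a - of_int (k a)) *\<^sub>R to_real a)"
    by (simp add: y_def to_real_diff to_real_sum to_real_scale l(2) scaleR_diff_left sum_subtractf)
  have "\<bar>y $ i\<bar> \<le> (\<Sum>a\<in>A. \<bar>a $ i\<bar>)" for i
  proof -
    have "\<bar>real_of_int (y $ i)\<bar> = \<bar>\<Sum>a\<in>A. (l a - of_int (k a)) * of_int (a $ i)\<bar>"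
      using arg_cong[OF y, of "\<lambda>v. v $ i"] by (simp add: to_real_nth)
    also have "\<dots> \<le> (\<Sum>a\<in>A. \<bar>(l a - of_int (k a)) * of_int (a $ i)\<bar>)"
      by (rule sum_abs)
    also have "\<dots> \<le> (\<Sum>a\<in>A. \<bar>real_of_int (a $ i)\<bar>)"
      using frac by (intro sum_mono) (simp add: abs_mult mult_left_le_one_le)
    finally have "real_of_int \<bar>y $ i\<bar> \<le> real_of_int (\<Sum>a\<in>A. \<bar>a $ i\<bar>)" by simp
    then show ?thesis by (simp only: of_int_le_iff)
  qed
  moreover have "k a \<ge> 0" if "a \<in> A" for a using l(1) that by (simp add: k_def)
  ultimately show ?thesis using that unfolding y_def by blast
qed

lemma lattice_point_bounded_coeffs:
  assumes "finite A" "grp A = UNIV"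
  obtains N where "N \<ge> 0"
    "\<And>y. (\<And>i. \<bar>y $ i\<bar> \<le> L) \<Longrightarrow> \<exists>h. (\<forall>a\<in>A. \<bar>h a\<bar> \<le> N) \<and> y = (\<Sum>a\<in>A. h a *s a)"
proof -
  have "\<forall>i. \<exists>k. axis i (1::int) = (\<Sum>a\<in>A. k a *s a)"
    using assms(2) by (auto simp: grp_def set_eq_iff)
  then obtain kk where kk: "\<And>i. axis i (1::int) = (\<Sum>a\<in>A. kk i a *s a)" by metis
  define N where "N = \<bar>L\<bar> * (\<Sum>i\<in>UNIV. \<Sum>a\<in>A. \<bar>kk i a\<bar>)"
  have "\<exists>h. (\<forall>a\<in>A. \<bar>h a\<bar> \<le> N) \<and> y = (\<Sum>a\<in>A. h a *s a)" if y: "\<And>i. \<bar>y $ i\<bar> \<le> L" for y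
  proof (intro exI conjI ballI)
    define h where "h a = (\<Sum>i\<in>UNIV. y $ i * kk i a)" for a
    show "\<bar>h a\<bar> \<le> N" if "a \<in> A" for a
    proof -
      have "\<bar>y $ i * kk i a\<bar> \<le> \<bar>L\<bar> * \<bar>kk i a\<bar>" for i
        using order.trans[OF y abs_ge_self] by (simp add: abs_mult mult_right_mono)
      then have "\<bar>h a\<bar> \<le> (\<Sum>i\<in>UNIV. \<bar>L\<bar> * \<bar>kk i a\<bar>)"
        unfolding h_def by (intro order.trans[OF sum_abs] sum_mono)
      also have "\<dots> \<le> N"
        unfolding N_def sum_distrib_left[symmetric]
        by (intro mult_left_mono sum_mono member_le_sum) (use that assms(1) in auto)
      finally show ?thesis .
    qed
    have "y = (\<Sum>i\<in>UNIV. (y $ i) *s axis i 1)"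
      by (simp add: vec_eq_iff sum_component axis_def if_distrib cong: if_cong)
    also have "\<dots> = (\<Sum>i\<in>UNIV. \<Sum>a\<in>A. (y $ i * kk i a) *s a)"
      by (simp add: kk vec_eq_iff sum_component sum_distrib_left mult.assoc)
    also have "\<dots> = (\<Sum>a\<in>A. h a *s a)"
      by (subst sum.swap) (simp add: h_def vec_eq_iff sum_component sum_distrib_right)
    finally show "y = (\<Sum>a\<in>A. h a *s a)" .
  qed
  moreover have "N \<ge> 0" by (simp add: N_def sum_nonneg)
  ultimately show ?thesis using that by blast
qed

text \<open>A lattice point of the cone is a nonnegative integral combination of \<open>A\<close> plus a
  bounded remainder; the bounded remainders have bounded integral coefficients, which
  \<open>c\<close> absorbs.\<close>

lemma exists_conductor:
  assumes "finite A" "grp A = UNIV"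
  obtains c where "c \<in> semigrp A" "\<And>m. to_real m \<in> real_cone A \<Longrightarrow> m + c \<in> semigrp A"
proof -
  define L where "L = (\<Sum>i\<in>UNIV. \<Sum>a\<in>A. \<bar>a $ i\<bar>)"
  obtain N where N: "N \<ge> 0"
    "\<And>y. (\<And>i. \<bar>y $ i\<bar> \<le> L) \<Longrightarrow> \<exists>h. (\<forall>a\<in>A. \<bar>h a\<bar> \<le> N) \<and> y = (\<Sum>a\<in>A. h a *s a)"
    using lattice_point_bounded_coeffs[OF assms] by blast
  define c where "c = (\<Sum>a\<in>A. N *s a)"
  have "m + c \<in> semigrp A" if m: "to_real m \<in> real_cone A" for m
  proof -
    obtain k where k: "\<And>a. a \<in> A \<Longrightarrow> k a \<ge> 0"
        "\<And>i. \<bar>(m - (\<Sum>a\<in>A. k a *s a)) $ i\<bar> \<le> (\<Sum>a\<in>A. \<bar>a $ i\<bar>)"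
      using cone_lattice_point_near_semigrp[OF assms(1) m] by blast
    have "\<bar>(m - (\<Sum>a\<in>A. k a *s a)) $ i\<bar> \<le> L" for i
      using k(2)[of i] member_le_sum[of i UNIV "\<lambda>i. \<Sum>a\<in>A. \<bar>a $ i\<bar>"]
      by (simp add: L_def sum_nonneg)
    then obtain h where h: "\<forall>a\<in>A. \<bar>h a\<bar> \<le> N" "m - (\<Sum>a\<in>A. k a *s a) = (\<Sum>a\<in>A. h a *s a)"
      using N(2) by blast
    have "m + c = (\<Sum>a\<in>A. k a *s a + h a *s a + N *s a)"
      using h(2) by (simp add: c_def sum.distrib algebra_simps)
    also have "\<dots> = (\<Sum>a\<in>A. (k a + h a + N) *s a)"
      by (simp add: vec_eq_iff algebra_simps)
    also have "\<dots> \<in> semigrp A"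
      using k(1) h(1) by (intro semigrp_nonneg_int_comb) force
    finally show ?thesis .
  qed
  moreover have "c \<in> semigrp A" unfolding c_def using N(1) by (intro semigrp_nonneg_int_comb)
  ultimately show ?thesis using that by blast
qed

section \<open>The scored closure and a proper ideal of \<open>D(R\<^sub>A)\<close>\<close>

definition scored_closure :: "(int ^ 'd) set \<Rightarrow> (int ^ 'd) set" where
  "scored_closure A = \<Inter> {{m. Fform A \<sigma> (to_real m) \<in> (\<lambda>n. Fform A \<sigma> (to_real n)) ` semigrp A}
         | \<sigma>. \<sigma> facet_of real_cone A}"

lemma mem_scored_closure_iff:
  "m \<in> scored_closure A \<longleftrightarrow> (\<forall>\<sigma>. \<sigma> facet_of real_cone A \<longrightarrow>
    Fform A \<sigma> (to_real m) \<in> (\<lambda>n. Fform A \<sigma> (to_real n)) ` semigrp A)"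
  unfolding scored_closure_def by blast

lemma scored_iff_scored_closure: "scored A \<longleftrightarrow> semigrp A = scored_closure A"
  unfolding scored_def scored_closure_def ..

lemma semigrp_subset_scored_closure: "semigrp A \<subseteq> scored_closure A"
  by (auto simp: mem_scored_closure_iff)

lemma scored_closure_in_real_cone:
  assumes "finite A" "grp A = UNIV" "m \<in> scored_closure A"
  shows "to_real m \<in> real_cone A"
proof (rule ccontr)
  assume "to_real m \<notin> real_cone A"
  then obtain \<sigma> where \<sigma>: "\<sigma> facet_of real_cone A" "Fform A \<sigma> (to_real m) < 0"
    using exists_facet_Fform_neg[OF assms(1,2)] by blast
  then obtain n where "n \<in> semigrp A" "Fform A \<sigma> (to_real m) = Fform A \<sigma> (to_real n)"
    using assms(3) unfolding mem_scored_closure_iff by blast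
  then show False
    using \<sigma> Fform_nonneg[OF assms(1,2) \<sigma>(1) semigrp_in_real_cone[OF assms(1)]] by fastforce
qed

lemma laurent_monom_coeff_poly_fun:
  assumes "is_diffop Q"
  obtains G where "poly_fun G" "\<And>x. Q (laurent_monom x) (x + s) = G (to_real x)"
proof -
  obtain U c where U: "finite U" and Q: "Q = (\<lambda>f m. \<Sum>ab\<in>U. c ab * mono_op (fst ab) (snd ab) f m)"
    using assms by (rule is_diffopE)
  let ?U = "{ab\<in>U. fst ab - int_vec (snd ab) = s}"
  define G where "G y = (\<Sum>ab\<in>?U. c ab * falling_prod y (snd ab))" for y
  have "mono_op a b (laurent_monom x) (x + s)
      = (if a - int_vec b = s then falling_prod (to_real x) b else 0)" for a b x
  proof -
    have "x + s - a + int_vec b = x \<longleftrightarrow> a - int_vec b = s" by (auto simp: algebra_simps)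
    then show ?thesis by (auto simp: mono_op_apply laurent_monom_def)
  qed
  then have "Q (laurent_monom x) (x + s) = G (to_real x)" for x
    using U by (simp add: Q G_def if_distrib[of "(*) _"] sum.inter_filter cong: if_cong)
  moreover have "poly_fun G"
    unfolding G_def using U by (intro poly_fun_sum poly_fun_mult poly_fun_const poly_fun_falling_prod) auto
  ultimately show ?thesis using that by blast
qed

lemma span_to_real_imageE:
  assumes "finite B" "x \<in> span (to_real ` B)"
  obtains r where "x = (\<Sum>a\<in>B. r a *\<^sub>R to_real a)"
proof -
  obtain u where "x = (\<Sum>v\<in>to_real ` B. u v *\<^sub>R v)"
    using assms span_finite[of "to_real ` B"] by auto
  also have "\<dots> = (\<Sum>a\<in>B. u (to_real a) *\<^sub>R to_real a)"
    using sum.reindex[OF inj_on_subset[OF inj_to_real subset_UNIV]] by simp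
  finally show ?thesis by (rule that)
qed

lemma DR_coeff_vanishes_outside_scored_closure:
  fixes A :: "(int ^ 'd) set"
  assumes fin: "finite A" and grp: "grp A = UNIV" and Q: "Q \<in> DR A"
    and n: "n \<in> scored_closure A" and m: "m \<notin> scored_closure A"
  shows "Q (laurent_monom n) m = 0"
proof -
  from m obtain \<sigma> where facet: "\<sigma> facet_of real_cone A"
    and Fm: "Fform A \<sigma> (to_real m) \<notin> (\<lambda>n. Fform A \<sigma> (to_real n)) ` semigrp A"
    unfolding mem_scored_closure_iff by blast
  define F where "F = Fform A \<sigma>"
  define A' where "A' = {a\<in>A. F (to_real a) = 0}"
  have linF: "linear F" unfolding F_def by (rule linear_Fform[OF fin grp facet])
  obtain n' where n': "n' \<in> semigrp A" "F (to_real n) = F (to_real n')"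
    using n facet unfolding mem_scored_closure_iff F_def by blast
  obtain G where G: "poly_fun G" "\<And>x. Q (laurent_monom x) (x + (m - n)) = G (to_real x)"
    using laurent_monom_coeff_poly_fun Q unfolding mem_DR_iff by metis
  have finA': "finite A'" using fin by (simp add: A'_def)
  have lattice_zeros: "G (to_real n' + (\<Sum>a\<in>A'. real (k a) *\<^sub>R to_real a)) = 0"
    for k :: "int ^ 'd \<Rightarrow> nat"
  proof -
    define x where "x = n' + (\<Sum>a\<in>A'. int (k a) *s a)"
    have x: "x \<in> semigrp A"
      unfolding x_def A'_def by (intro semigrp_add n'(1) semigrp_subset_comb fin) auto
    have tx: "to_real x = to_real n' + (\<Sum>a\<in>A'. real (k a) *\<^sub>R to_real a)"
      by (simp add: x_def to_real_add to_real_sum to_real_scale)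
    have Fxs: "F (to_real (x + (m - n))) = F (to_real m)"
      using linF n'(2) by (simp add: tx to_real_add to_real_diff linear_add linear_diff
          linear_sum linear_scale A'_def)
    have "x + (m - n) \<notin> semigrp A"
      using Fm image_eqI[where f = "\<lambda>n. F (to_real n)", OF Fxs[symmetric]] unfolding F_def by blast
    moreover have "Q (laurent_monom x) \<in> laurent_on (semigrp A)"
      using Q x by (simp add: mem_DR_iff R_A_eq_laurent_on)
    ultimately have "Q (laurent_monom x) (x + (m - n)) = 0" by (auto simp: laurent_on_def)
    then show ?thesis using G(2) tx by simp
  qed
  have vanish: "G (to_real n' + (\<Sum>a\<in>A'. r a *\<^sub>R to_real a)) = 0" for r
    by (rule poly_fun_vanishes_on_real_combinations[OF finA' G(1) lattice_zeros])
  have "F (to_real n - to_real n') = 0" using linF n'(2) by (simp add: linear_diff)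
  then have "to_real n - to_real n' \<in> span (to_real ` A')"
    using Fform_kernel_subset_span[OF fin grp facet] unfolding F_def A'_def by blast
  then obtain r where "to_real n - to_real n' = (\<Sum>a\<in>A'. r a *\<^sub>R to_real a)"
    using span_to_real_imageE[OF finA'] by blast
  then have "G (to_real n) = 0" using vanish[of r] by (simp add: algebra_simps)
  then show ?thesis using G(2)[of n] by simp
qed

lemma DR_preserves_laurent_on_scored_closure:
  assumes "finite A" "grp A = UNIV" "Q \<in> DR A" "f \<in> laurent_on (scored_closure A)"
  shows "Q f \<in> laurent_on (scored_closure A)"
proof -
  have Q: "is_diffop Q" using assms(3) by (simp add: mem_DR_iff)
  have f: "laurent f" "{n. f n \<noteq> 0} \<subseteq> scored_closure A"
    using assms(4) by (auto simp: laurent_on_def)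
  have "Q f m = 0" if "m \<notin> scored_closure A" for m
    unfolding is_diffop_apply_laurent[OF Q f(1)]
    using f(2) DR_coeff_vanishes_outside_scored_closure[OF assms(1-3) _ that]
    by (intro sum.neutral) auto
  then show ?thesis using is_diffop_laurent[OF Q f(1)] by (auto simp: laurent_on_def)
qed

definition operators_into_R_A :: "(int ^ 'd) set \<Rightarrow> (int ^ 'd) set \<Rightarrow> (('d::finite) lpoly \<Rightarrow> 'd lpoly) set"
  where "operators_into_R_A A T = {P \<in> DR A. \<forall>f\<in>laurent_on T. P f \<in> R_A A}"

lemma ideal_operators_into_R_A:
  assumes preserve: "\<And>Q f. Q \<in> DR A \<Longrightarrow> f \<in> laurent_on T \<Longrightarrow> Q f \<in> laurent_on T"
  shows "ideal (operators_into_R_A A T) (D_ring A)"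
proof -
  interpret ring "D_ring A" by (rule ring_D_ring)
  let ?I = "{P \<in> DR A. \<forall>f\<in>laurent_on T. P f \<in> R_A A}"
  have zero: "\<zero>\<^bsub>D_ring A\<^esub> \<in> ?I"
    using zero_closed by (auto simp: D_ring_def R_A_eq_laurent_on laurent_on_zero)
  show ?thesis
    unfolding operators_into_R_A_def
  proof (rule idealI)
    show "subgroup ?I (add_monoid (D_ring A))"
    proof (rule add.subgroupI)
      show "?I \<subseteq> carrier (D_ring A)" by (auto simp: D_ring_def)
      show "?I \<noteq> {}" using zero by blast
    next
      fix P assume P: "P \<in> ?I"
      then have "P \<in> carrier (D_ring A)" by (simp add: D_ring_def)
      then have "\<ominus>\<^bsub>D_ring A\<^esub> P = (\<lambda>f m. - P f m)" "(\<lambda>f m. - P f m) \<in> DR A"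
        using D_ring_a_inv D_ring_uminus_closed by (auto simp: D_ring_def)
      then show "\<ominus>\<^bsub>D_ring A\<^esub> P \<in> ?I"
        using P by (auto simp: R_A_eq_laurent_on intro: laurent_on_uminus)
    next
      fix P P' assume "P \<in> ?I" "P' \<in> ?I"
      then show "P \<oplus>\<^bsub>D_ring A\<^esub> P' \<in> ?I"
        using add.m_closed[of P P'] by (auto simp: D_ring_def R_A_eq_laurent_on intro: laurent_on_add)
    qed
  next
    fix P X assume "P \<in> ?I" "X \<in> carrier (D_ring A)"
    then show "X \<otimes>\<^bsub>D_ring A\<^esub> P \<in> ?I" "P \<otimes>\<^bsub>D_ring A\<^esub> X \<in> ?I"
      using m_closed[of X P] m_closed[of P X] preserve
      by (auto simp: D_ring_def mem_DR_iff)
  qed (rule ring_D_ring)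
qed

lemma mono_op_translate: "mono_op c 0 f m = f (m - c)"
  by (simp add: mono_op_apply)

lemma mono_op_translate_laurent_on:
  assumes "\<And>m. m \<in> T \<Longrightarrow> m + c \<in> T'" "f \<in> laurent_on T"
  shows "mono_op c 0 f \<in> laurent_on T'"
proof -
  have "laurent (mono_op c 0 f)"
    using assms(2) by (intro is_diffop_laurent[OF is_diffop_mono_op]) (simp add: laurent_on_def)
  moreover have "m \<in> T'" if "mono_op c 0 f m \<noteq> 0" for m
    using assms that[unfolded mono_op_translate] by (force simp: laurent_on_def)
  ultimately show ?thesis by (auto simp: laurent_on_def)
qed

lemma mono_op_translate_in_operators_into_R_A:
  assumes "c \<in> semigrp A" "\<And>m. m \<in> T \<Longrightarrow> m + c \<in> semigrp A"
  shows "mono_op c 0 \<in> operators_into_R_A A T"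
  unfolding operators_into_R_A_def mem_DR_iff R_A_eq_laurent_on
  using assms by (auto intro: is_diffop_mono_op mono_op_translate_laurent_on semigrp_add)

lemma mono_op_translate_neq_zero: "mono_op c 0 \<noteq> \<zero>\<^bsub>D_ring A\<^esub>"
proof
  assume "mono_op c 0 = \<zero>\<^bsub>D_ring A\<^esub>"
  then have "mono_op c 0 (laurent_monom 0) c = 0" by (simp add: D_ring_def)
  then show False by (simp add: mono_op_translate laurent_monom_def)
qed

lemma one_D_ring_notin_operators_into_R_A:
  assumes "m \<in> T" "m \<notin> semigrp A"
  shows "\<one>\<^bsub>D_ring A\<^esub> \<notin> operators_into_R_A A T"
proof
  assume "\<one>\<^bsub>D_ring A\<^esub> \<in> operators_into_R_A A T"
  then have "\<forall>f\<in>laurent_on T. f \<in> laurent_on (semigrp A)"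
    unfolding operators_into_R_A_def R_A_eq_laurent_on by (simp add: D_ring_def)
  moreover have "laurent_monom m \<in> laurent_on T" using assms(1) by simp
  ultimately have "laurent_monom m \<in> laurent_on (semigrp A)" by blast
  with assms(2) show False by simp
qed

theorem proposition8p5:
  fixes A :: "(int ^ 'd) set"
  assumes "finite A"
    and "grp A = UNIV"
    and "simple_ring (D_ring A)"
  shows "scored A"
proof (rule ccontr)
  let ?I = "operators_into_R_A A (scored_closure A)"
  assume "\<not> scored A"
  then obtain m0 where m0: "m0 \<in> scored_closure A" "m0 \<notin> semigrp A"
    using semigrp_subset_scored_closure unfolding scored_iff_scored_closure by blast
  obtain c where c: "c \<in> semigrp A" "\<And>m. to_real m \<in> real_cone A \<Longrightarrow> m + c \<in> semigrp A"
    using exists_conductor[OF assms(1,2)] by blast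
  have "ideal ?I (D_ring A)"
    by (rule ideal_operators_into_R_A) (rule DR_preserves_laurent_on_scored_closure[OF assms(1,2)])
  then have "?I = {\<zero>\<^bsub>D_ring A\<^esub>} \<or> ?I = carrier (D_ring A)"
    using assms(3) unfolding simple_ring_def by blast
  moreover have "mono_op c 0 \<in> ?I"
    using c scored_closure_in_real_cone[OF assms(1,2)]
    by (intro mono_op_translate_in_operators_into_R_A) auto
  moreover have "\<one>\<^bsub>D_ring A\<^esub> \<notin> ?I"
    using m0 by (rule one_D_ring_notin_operators_into_R_A)
  moreover have "\<one>\<^bsub>D_ring A\<^esub> \<in> carrier (D_ring A)"
    by (rule ring.ring_simprules(6)[OF ring_D_ring])
  ultimately show False using mono_op_translate_neq_zero by blast
qed

end
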